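(* Let $m,k,\ell,q,u,w$ be nonnegative integers with $u\le m$ and $m+(k+2\ell)q = u+(k+2\ell)w$, and set $n = m+(k+2\ell)q$. Let $g\colon \mathbb{C}^m\to\mathbb{C}^u$ and $p\colon \mathbb{C}^{m+q}\to\mathbb{C}^w$ be polynomial maps with real coefficients, and define $f\colon\mathbb{C}^n\to\mathbb{C}^n$ by $$f(a,b_1,\dots,b_k,c_1,\dots,c_\ell,d_1,\dots,d_\ell) = \big(g(a),\ p(a,b_1),\dots,p(a,b_k),\ p(a,c_1),\dots,p(a,c_\ell),\ p(a,d_1),\dots,p(a,d_\ell)\big),$$ where $a\in\mathbb{C}^m$ and $b_r,c_s,d_t\in\mathbb{C}^q$. Then the set $$V=\left\{(a,b_1,\dots,b_k,c_1,\dots,c_\ell,\overline{c_1},\dots,\overline{c_\ell}) : a\in\mathbb{R}^m,\ b_i\in\mathbb{R}^q,\ c_j\in\mathbb{C}^q\right\}\subset\mathbb{C}^n$$ is Newton invariant with respect to $f$, where $\overline{\,\cdot\,}$ denotes (coordinatewise) complex conjugation.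
   Context: For an analytic map $f\colon\mathbb{C}^n\to\mathbb{C}^n$ with Jacobian matrix $Df(x)$, the Newton iteration map $N_f\colon\mathbb{C}^n\to\mathbb{C}^n$ is defined by $N_f(x)=x-Df(x)^{-1}f(x)$ if $Df(x)$ is invertible and $N_f(x)=x$ otherwise; $N_f^k$ denotes the $k$-fold composition of $N_f$. A set $V\subset\mathbb{C}^n$ is called Newton invariant with respect to $f$ if $N_f(v)\in V$ for every $v\in V$, and $\lim_{k\to\infty}N_f^k(v)\in V$ for every $v\in V$ for which this limit exists. *)

theory Defs
  imports Complex_Main "Jordan_Normal_Form.Determinant"
begin

definition real_poly_fun :: "nat \<Rightarrow> (complex vec \<Rightarrow> complex) \<Rightarrow> bool" where
  "real_poly_fun m h \<longleftrightarrow> (\<exists>(S :: (nat \<Rightarrow> nat) set) (c :: (nat \<Rightarrow> nat) \<Rightarrow> real). finite S \<and>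
     (\<forall>x. dim_vec x = m \<longrightarrow> h x = (\<Sum>\<alpha>\<in>S. of_real (c \<alpha>) * (\<Prod>i<m. (x $ i) ^ \<alpha> i))))"

definition real_poly_map :: "nat \<Rightarrow> nat \<Rightarrow> (complex vec \<Rightarrow> complex vec) \<Rightarrow> bool" where
  "real_poly_map m u g \<longleftrightarrow> (\<forall>x. dim_vec x = m \<longrightarrow> dim_vec (g x) = u) \<and>
     (\<forall>j<u. real_poly_fun m (\<lambda>x. g x $ j))"

definition jacobian :: "nat \<Rightarrow> (complex vec \<Rightarrow> complex vec) \<Rightarrow> complex vec \<Rightarrow> complex mat" where
  "jacobian n f x = mat n n (\<lambda>(i, j).
      (THE D. ((\<lambda>t. f (vec n (\<lambda>l. if l = j then t else x $ l)) $ i)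
                 has_field_derivative D) (at (x $ j))))"

definition inv_mat :: "nat \<Rightarrow> complex mat \<Rightarrow> complex mat" where
  "inv_mat n A = (THE B. B \<in> carrier_mat n n \<and> A * B = 1\<^sub>m n \<and> B * A = 1\<^sub>m n)"

definition newton_map :: "nat \<Rightarrow> (complex vec \<Rightarrow> complex vec) \<Rightarrow> complex vec \<Rightarrow> complex vec" where
  "newton_map n f x = (if invertible_mat (jacobian n f x)
      then x - inv_mat n (jacobian n f x) *\<^sub>v f x else x)"

definition newton_invariant :: "nat \<Rightarrow> (complex vec \<Rightarrow> complex vec) \<Rightarrow> complex vec set \<Rightarrow> bool" where
  "newton_invariant n f V \<longleftrightarrow>
     (\<forall>v\<in>V. newton_map n f v \<in> V) \<and>
     (\<forall>v\<in>V. \<forall>L. dim_vec L = n \<and> (\<forall>i<n. (\<lambda>k. ((newton_map n f ^^ k) v) $ i) \<longlonglongrightarrow> L $ i)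
         \<longrightarrow> L \<in> V)"

definition blk :: "nat \<Rightarrow> nat \<Rightarrow> complex vec \<Rightarrow> nat \<Rightarrow> complex vec" where
  "blk m q x j = vec q (\<lambda>i. x $ (m + j * q + i))"

definition pair_blk :: "nat \<Rightarrow> nat \<Rightarrow> complex vec \<Rightarrow> nat \<Rightarrow> complex vec" where
  "pair_blk m q x j = vec (m + q) (\<lambda>i. if i < m then x $ i else x $ (m + j * q + (i - m)))"

text \<open>f(a, b_1..b_k, c_1..c_l, d_1..d_l) = (g a, p(a,b_1), ..., p(a,d_l)); the
  blocks b, c, d are the blocks 0..k-1, k..k+l-1, k+l..k+2l-1.\<close>
definition newton_f :: "nat \<Rightarrow> nat \<Rightarrow> nat \<Rightarrow> nat \<Rightarrow> nat \<Rightarrow>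
    (complex vec \<Rightarrow> complex vec) \<Rightarrow> (complex vec \<Rightarrow> complex vec) \<Rightarrow> complex vec \<Rightarrow> complex vec" where
  "newton_f n m q u w g p x = vec n (\<lambda>i.
     if i < u then g (vec m (\<lambda>l. x $ l)) $ i
     else p (pair_blk m q x ((i - u) div w)) $ ((i - u) mod w))"

definition V_set :: "nat \<Rightarrow> nat \<Rightarrow> nat \<Rightarrow> nat \<Rightarrow> nat \<Rightarrow> complex vec set" where
  "V_set n m k l q = {x. dim_vec x = n \<and> (\<forall>i<m. x $ i \<in> \<real>) \<and>
     (\<forall>r<k. \<forall>i<q. blk m q x r $ i \<in> \<real>) \<and>
     (\<forall>s<l. \<forall>i<q. blk m q x (k + l + s) $ i = cnj (blk m q x (k + s) $ i))}"

end

theory Submission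
  imports "HOL-Analysis.Complex_Analysis_Basics" Defs
begin

text \<open>\<open>V\<close> is the fixed-point set of the antiholomorphic involution \<open>x \<mapsto> cnj (x \<circ> \<sigma>)\<close>, where the
  coordinate permutation \<open>\<sigma>\<close> fixes the \<open>a\<close>- and \<open>b\<close>-coordinates and swaps each block \<open>c\<^sub>s\<close> with
  \<open>d\<^sub>s\<close>. Because \<open>g\<close> and \<open>p\<close> have real coefficients, \<open>f\<close> intertwines this involution with the
  analogous one on the target, which swaps the outputs \<open>p(a,c\<^sub>s)\<close> and \<open>p(a,d\<^sub>s)\<close>. At a point
  \<open>v \<in> V\<close> the Jacobian inherits the symmetry, so the Newton correction, the unique solution of
  \<open>Df(v) z = f(v)\<close>, is again fixed and \<open>N\<^sub>f(v) \<in> V\<close>. Since \<open>V\<close> is closed, it also contains every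
  limit of Newton iterates.\<close>

no_notation Finite_Cartesian_Product.vec_nth (infixl \<open>$\<close> 90)

abbreviation coord_line :: "nat \<Rightarrow> complex vec \<Rightarrow> nat \<Rightarrow> complex \<Rightarrow> complex vec" where
  "coord_line n x j t \<equiv> vec n (\<lambda>l. if l = j then t else x $ l)"

abbreviation conj_perm :: "nat \<Rightarrow> (nat \<Rightarrow> nat) \<Rightarrow> complex vec \<Rightarrow> complex vec" where
  "conj_perm n \<sigma> x \<equiv> vec n (\<lambda>j. cnj (x $ \<sigma> j))"

definition conj_fixed :: "nat \<Rightarrow> (nat \<Rightarrow> nat) \<Rightarrow> complex vec set" where
  "conj_fixed n \<sigma> = {x. dim_vec x = n \<and> (\<forall>j<n. x $ j = cnj (x $ \<sigma> j))}"

lemma conj_fixed_iff: "x \<in> conj_fixed n \<sigma> \<longleftrightarrow> dim_vec x = n \<and> conj_perm n \<sigma> x = x"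
proof
  assume "x \<in> conj_fixed n \<sigma>"
  then show "dim_vec x = n \<and> conj_perm n \<sigma> x = x"
    by (auto simp: conj_fixed_def intro!: eq_vecI)
next
  assume x: "dim_vec x = n \<and> conj_perm n \<sigma> x = x"
  have "x $ j = cnj (x $ \<sigma> j)" if "j < n" for j
  proof -
    have "x $ j = conj_perm n \<sigma> x $ j" using x by simp
    then show ?thesis using that by simp
  qed
  with x show "x \<in> conj_fixed n \<sigma>" by (simp add: conj_fixed_def)
qed

lemma conj_fixed_diff:
  assumes "\<And>j. j < n \<Longrightarrow> \<sigma> j < n" and "x \<in> conj_fixed n \<sigma>" and "y \<in> conj_fixed n \<sigma>"
  shows "x - y \<in> conj_fixed n \<sigma>"
  using assms by (simp add: conj_fixed_def)

lemma conj_fixed_closed_under_limits: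
  assumes "\<And>j. j < n \<Longrightarrow> \<sigma> j < n"
    and "\<And>K. X K \<in> conj_fixed n \<sigma>"
    and "dim_vec L = n" and lim: "\<And>i. i < n \<Longrightarrow> (\<lambda>K. X K $ i) \<longlonglongrightarrow> L $ i"
  shows "L \<in> conj_fixed n \<sigma>"
  unfolding conj_fixed_def
proof (intro CollectI conjI allI impI)
  fix j assume j: "j < n"
  have "(\<lambda>K. X K $ j) = (\<lambda>K. cnj (X K $ \<sigma> j))"
    using assms(2) j by (auto simp: conj_fixed_def)
  then have "(\<lambda>K. X K $ j) \<longlonglongrightarrow> cnj (L $ \<sigma> j)"
    using lim[OF assms(1)[OF j]] by (simp add: tendsto_cnj)
  then show "L $ j = cnj (L $ \<sigma> j)"
    using lim[OF j] LIMSEQ_unique by blast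
qed fact

lemma jacobian_entry:
  assumes "i < n" "j < n"
    and "((\<lambda>t. F (coord_line n x j t) $ i) has_field_derivative D) (at (x $ j))"
  shows "jacobian n F x $$ (i, j) = D"
  using assms by (simp add: jacobian_def DERIV_unique the_equality)

lemma inv_mat_inverse:
  assumes "invertible_mat A" "A \<in> carrier_mat n n"
  shows "inv_mat n A \<in> carrier_mat n n" "A * inv_mat n A = 1\<^sub>m n" "inv_mat n A * A = 1\<^sub>m n"
proof -
  obtain B where AB: "A * B = 1\<^sub>m n" and BA: "B * A = 1\<^sub>m (dim_row B)"
    using assms unfolding invertible_mat_def inverts_mat_def by auto
  have B: "B \<in> carrier_mat n n"
    using AB BA assms(2) by (metis carrier_matD carrier_matI index_mult_mat(2,3) index_one_mat(2,3))
  have "inv_mat n A \<in> carrier_mat n n \<and> A * inv_mat n A = 1\<^sub>m n \<and> inv_mat n A * A = 1\<^sub>m n"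
    unfolding inv_mat_def
  proof (rule theI[of _ B])
    show "B \<in> carrier_mat n n \<and> A * B = 1\<^sub>m n \<and> B * A = 1\<^sub>m n" using B AB BA by auto
    fix C assume C: "C \<in> carrier_mat n n \<and> A * C = 1\<^sub>m n \<and> C * A = 1\<^sub>m n"
    then have "C = C * (A * B)" using right_mult_one_mat[of C n n] by (simp add: AB)
    also have "\<dots> = (C * A) * B" using C assms(2) B by (metis assoc_mult_mat)
    also have "\<dots> = B" using C B by simp
    finally show "C = B" .
  qed
  then show "inv_mat n A \<in> carrier_mat n n" "A * inv_mat n A = 1\<^sub>m n" "inv_mat n A * A = 1\<^sub>m n"
    by auto
qed

locale conj_equivariant =
  fixes n :: nat and \<sigma> \<tau> :: "nat \<Rightarrow> nat" and F :: "complex vec \<Rightarrow> complex vec"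
  assumes \<sigma>_involution: "\<sigma> (\<sigma> j) = j"
    and \<sigma>_less: "j < n \<Longrightarrow> \<sigma> j < n"
    and \<tau>_less: "i < n \<Longrightarrow> \<tau> i < n"
    and dim_F: "dim_vec (F x) = n"
    and F_conj_perm: "dim_vec y = n \<Longrightarrow> F (conj_perm n \<sigma> y) = conj_perm n \<tau> (F y)"
    and F_holomorphic_on_lines:
      "dim_vec x = n \<Longrightarrow> i < n \<Longrightarrow> j < n \<Longrightarrow> (\<lambda>t. F (coord_line n x j t) $ i) holomorphic_on UNIV"
begin

text \<open>At a fixed point \<open>v\<close>, the line through \<open>v\<close> in direction \<open>j\<close> is the conjugate of the line in
  direction \<open>\<sigma> j\<close>, so each partial derivative of \<open>F\<close> is the conjugate of another one.\<close>
lemma jacobian_conj: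
  assumes v: "v \<in> conj_fixed n \<sigma>" and i: "i < n" and j: "j < n"
  shows "jacobian n F v $$ (i, j) = cnj (jacobian n F v $$ (\<tau> i, \<sigma> j))"
proof -
  have dim_v: "dim_vec v = n" and v_\<sigma>j: "v $ \<sigma> j = cnj (v $ j)"
    using v \<sigma>_less[OF j] \<sigma>_involution by (auto simp: conj_fixed_def)
  define \<psi> where "\<psi> = (\<lambda>t. F (coord_line n v (\<sigma> j) t) $ \<tau> i)"
  have line: "coord_line n v j t = conj_perm n \<sigma> (coord_line n v (\<sigma> j) (cnj t))" for t
  proof (rule eq_vecI)
    fix l assume "l < dim_vec (conj_perm n \<sigma> (coord_line n v (\<sigma> j) (cnj t)))"
    then have l: "l < n" by simp
    have "(\<sigma> l = \<sigma> j) = (l = j)" by (metis \<sigma>_involution)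
    then show "coord_line n v j t $ l = conj_perm n \<sigma> (coord_line n v (\<sigma> j) (cnj t)) $ l"
      using l \<sigma>_less[OF l] v by (auto simp: conj_fixed_def)
  qed simp
  have "(\<lambda>t. F (coord_line n v j t) $ i) = cnj \<circ> \<psi> \<circ> cnj"
    by (auto simp: line F_conj_perm i \<psi>_def)
  moreover have "(\<psi> has_field_derivative deriv \<psi> z) (at z)" for z
    using F_holomorphic_on_lines[OF dim_v \<tau>_less[OF i] \<sigma>_less[OF j]]
    by (intro holomorphic_derivI[of _ UNIV]) (auto simp: \<psi>_def)
  ultimately have "((\<lambda>t. F (coord_line n v j t) $ i) has_field_derivative cnj (deriv \<psi> (v $ \<sigma> j)))
      (at (v $ j))"
    by (simp add: v_\<sigma>j has_field_derivative_cnj_cnj)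
  then have "jacobian n F v $$ (i, j) = cnj (deriv \<psi> (v $ \<sigma> j))"
    by (rule jacobian_entry[OF i j])
  moreover have "jacobian n F v $$ (\<tau> i, \<sigma> j) = deriv \<psi> (v $ \<sigma> j)"
    using \<open>\<And>z. (\<psi> has_field_derivative deriv \<psi> z) (at z)\<close>
    by (intro jacobian_entry \<tau>_less \<sigma>_less i j) (simp add: \<psi>_def)
  ultimately show ?thesis by simp
qed

lemma jacobian_mult_conj_perm:
  assumes v: "v \<in> conj_fixed n \<sigma>" and z: "dim_vec z = n"
  shows "jacobian n F v *\<^sub>v conj_perm n \<sigma> z = conj_perm n \<tau> (jacobian n F v *\<^sub>v z)"
proof (rule eq_vecI)
  fix i assume "i < dim_vec (conj_perm n \<tau> (jacobian n F v *\<^sub>v z))"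
  then have i: "i < n" by simp
  let ?J = "jacobian n F v"
  have "(?J *\<^sub>v conj_perm n \<sigma> z) $ i = (\<Sum>j = 0..<n. ?J $$ (i, j) * cnj (z $ \<sigma> j))"
    using i by (simp add: jacobian_def scalar_prod_def)
  also have "\<dots> = cnj (\<Sum>j = 0..<n. ?J $$ (\<tau> i, \<sigma> j) * z $ \<sigma> j)"
    using jacobian_conj[OF v i] by simp
  also have "(\<Sum>j = 0..<n. ?J $$ (\<tau> i, \<sigma> j) * z $ \<sigma> j) = (\<Sum>j = 0..<n. ?J $$ (\<tau> i, j) * z $ j)"
    by (rule sum.reindex_bij_witness[of _ \<sigma> \<sigma>]) (auto simp: \<sigma>_involution \<sigma>_less)
  also have "\<dots> = (?J *\<^sub>v z) $ \<tau> i"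
    using \<tau>_less[OF i] z by (simp add: jacobian_def scalar_prod_def)
  finally show "(?J *\<^sub>v conj_perm n \<sigma> z) $ i = conj_perm n \<tau> (?J *\<^sub>v z) $ i"
    using i by simp
qed (simp add: jacobian_def)

text \<open>The Newton correction \<open>z\<close> is the unique solution of \<open>J z = F v\<close>; the symmetries of \<open>J\<close> and
  \<open>F v\<close> show that \<open>conj_perm n \<sigma> z\<close> solves the same system.\<close>
lemma newton_map_conj_fixed:
  assumes v: "v \<in> conj_fixed n \<sigma>"
  shows "newton_map n F v \<in> conj_fixed n \<sigma>"
proof (cases "invertible_mat (jacobian n F v)")
  case False
  then show ?thesis using v by (simp add: newton_map_def)
next
  case True
  define J where "J = jacobian n F v"
  define z where "z = inv_mat n J *\<^sub>v F v"
  have J: "J \<in> carrier_mat n n" by (simp add: J_def jacobian_def)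
  note inv = inv_mat_inverse[OF True[folded J_def] J]
  have Fv: "F v \<in> carrier_vec n" by (simp add: dim_F carrier_vecI)
  have z: "z \<in> carrier_vec n" using inv(1) by (simp add: z_def carrier_vecI)
  have "J *\<^sub>v z = F v"
    using inv(2) J Fv by (simp add: z_def flip: assoc_mult_mat_vec[OF J inv(1) Fv])
  moreover have "conj_perm n \<tau> (F v) = F v"
    using F_conj_perm[of v] v by (simp add: conj_fixed_iff)
  ultimately have "J *\<^sub>v conj_perm n \<sigma> z = F v"
    using jacobian_mult_conj_perm[OF v] z by (simp add: J_def)
  then have "inv_mat n J *\<^sub>v (J *\<^sub>v conj_perm n \<sigma> z) = z"
    by (simp add: z_def)
  moreover have "inv_mat n J *\<^sub>v (J *\<^sub>v conj_perm n \<sigma> z) = conj_perm n \<sigma> z"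
    using inv(3) by (simp add: carrier_vecI flip: assoc_mult_mat_vec[OF inv(1) J])
  ultimately have "z \<in> conj_fixed n \<sigma>"
    using z by (simp add: conj_fixed_iff)
  then have "v - z \<in> conj_fixed n \<sigma>"
    using v by (intro conj_fixed_diff \<sigma>_less)
  then show ?thesis
    using True by (simp add: newton_map_def J_def z_def)
qed

theorem newton_invariant_conj_fixed: "newton_invariant n F (conj_fixed n \<sigma>)"
proof -
  have iterates: "(newton_map n F ^^ K) v \<in> conj_fixed n \<sigma>" if "v \<in> conj_fixed n \<sigma>" for v K
    by (induction K) (simp_all add: that newton_map_conj_fixed)
  show ?thesis
    unfolding newton_invariant_def
  proof (intro conjI ballI allI impI)
    fix v L assume v: "v \<in> conj_fixed n \<sigma>"
      and L: "dim_vec L = n \<and> (\<forall>i<n. (\<lambda>K. (newton_map n F ^^ K) v $ i) \<longlonglongrightarrow> L $ i)"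
    show "L \<in> conj_fixed n \<sigma>"
    proof (rule conj_fixed_closed_under_limits[OF \<sigma>_less])
      show "(newton_map n F ^^ K) v \<in> conj_fixed n \<sigma>" for K
        using v by (rule iterates)
      show "dim_vec L = n" using L by simp
      show "(\<lambda>K. (newton_map n F ^^ K) v $ i) \<longlonglongrightarrow> L $ i" if "i < n" for i
        using L that by simp
    qed
  qed (rule newton_map_conj_fixed)
qed

end

definition swap_cd_block :: "nat \<Rightarrow> nat \<Rightarrow> nat \<Rightarrow> nat" where
  "swap_cd_block k l B =
     (if k \<le> B \<and> B < k + l then B + l else if k + l \<le> B \<and> B < k + 2 * l then B - l else B)"

definition swap_cd_coord :: "nat \<Rightarrow> nat \<Rightarrow> nat \<Rightarrow> nat \<Rightarrow> nat \<Rightarrow> nat" where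
  "swap_cd_coord m k l q j =
     (if j < m then j else m + swap_cd_block k l ((j - m) div q) * q + (j - m) mod q)"

lemma swap_cd_block_involution: "swap_cd_block k l (swap_cd_block k l B) = B"
  unfolding swap_cd_block_def by auto

lemma swap_cd_block_less: "B < k + 2 * l \<Longrightarrow> swap_cd_block k l B < k + 2 * l"
  unfolding swap_cd_block_def by auto

lemma block_index_less:
  fixes B K r q m :: nat
  assumes "B < K" "r < q"
  shows "m + B * q + r < m + K * q"
proof -
  have "(B + 1) * q \<le> K * q" using assms(1) by (intro mult_le_mono1) simp
  then show ?thesis using assms(2) by simp
qed

lemma block_decomposition:
  fixes m j K q :: nat
  assumes "m \<le> j" "j < m + K * q"
  obtains B r where "j = m + B * q + r" "r < q" "B < K"
proof
  have q: "q > 0" using assms by (cases q) auto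
  show "j = m + (j - m) div q * q + (j - m) mod q" using assms(1) by simp
  show "(j - m) mod q < q" using q by simp
  show "(j - m) div q < K" using assms by (intro less_mult_imp_div_less) simp
qed

lemma swap_cd_coord_block:
  "r < q \<Longrightarrow> swap_cd_coord m k l q (m + B * q + r) = m + swap_cd_block k l B * q + r"
  unfolding swap_cd_coord_def by auto

lemma swap_cd_coord_involution: "swap_cd_coord m k l q (swap_cd_coord m k l q j) = j"
proof (cases "j < m \<or> q = 0")
  case True
  then show ?thesis by (auto simp: swap_cd_coord_def)
next
  case False
  then have "j = m + (j - m) div q * q + (j - m) mod q" "(j - m) mod q < q" by auto
  then show ?thesis
    by (metis swap_cd_coord_block swap_cd_block_involution)
qed

lemma swap_cd_coord_less:
  assumes "j < m + (k + 2 * l) * q"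
  shows "swap_cd_coord m k l q j < m + (k + 2 * l) * q"
proof (cases "j < m")
  case True
  then show ?thesis by (simp add: swap_cd_coord_def)
next
  case False
  then obtain B r where "j = m + B * q + r" "r < q" "B < k + 2 * l"
    using block_decomposition[of m j "k + 2 * l" q] assms by auto
  then show ?thesis by (simp add: swap_cd_coord_block block_index_less swap_cd_block_less)
qed

lemma blk_index: "i < q \<Longrightarrow> blk m q x B $ i = x $ (m + B * q + i)"
  by (simp add: blk_def)

lemma V_set_subset_conj_fixed:
  assumes n: "n = m + (k + 2 * l) * q"
  shows "V_set n m k l q \<subseteq> conj_fixed n (swap_cd_coord m k l q)"
proof
  fix x assume x: "x \<in> V_set n m k l q"
  have "x $ j = cnj (x $ swap_cd_coord m k l q j)" if j: "j < n" for j
  proof (cases "j < m")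
    case True
    then have "x $ j \<in> \<real>" using x by (simp add: V_set_def)
    then show ?thesis using True by (simp add: swap_cd_coord_def Reals_cnj_iff)
  next
    case False
    then obtain B r where j_eq: "j = m + B * q + r" and r: "r < q" and B: "B < k + 2 * l"
      using block_decomposition[of m j "k + 2 * l" q] j n by auto
    have "B < k \<or> (B - k < l \<and> B = k + (B - k)) \<or> (B - k - l < l \<and> B = k + l + (B - k - l))"
      using B by arith
    then consider "B < k" | s where "s < l" "B = k + s" | s where "s < l" "B = k + l + s"
      by blast
    then show ?thesis
    proof cases
      case 1
      then have "blk m q x B $ r \<in> \<real>" using x r by (simp add: V_set_def)
      moreover have "swap_cd_block k l B = B" using 1 by (simp add: swap_cd_block_def)
      ultimately show ?thesis using r by (simp add: j_eq blk_index swap_cd_coord_block Reals_cnj_iff)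
    next
      case (2 s)
      then have "blk m q x (k + l + s) $ r = cnj (blk m q x (k + s) $ r)"
        using x r by (simp add: V_set_def)
      moreover have "swap_cd_block k l B = k + l + s" using 2 by (simp add: swap_cd_block_def)
      ultimately show ?thesis using r 2 by (simp add: j_eq blk_index swap_cd_coord_block)
    next
      case (3 s)
      then have "blk m q x (k + l + s) $ r = cnj (blk m q x (k + s) $ r)"
        using x r by (simp add: V_set_def)
      moreover have "swap_cd_block k l B = k + s" using 3 by (simp add: swap_cd_block_def)
      ultimately show ?thesis using r 3 by (simp add: j_eq blk_index swap_cd_coord_block)
    qed
  qed
  then show "x \<in> conj_fixed n (swap_cd_coord m k l q)"
    using x by (simp add: conj_fixed_def V_set_def)
qed

lemma conj_fixed_subset_V_set:
  assumes n: "n = m + (k + 2 * l) * q"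
  shows "conj_fixed n (swap_cd_coord m k l q) \<subseteq> V_set n m k l q"
proof
  fix x assume x: "x \<in> conj_fixed n (swap_cd_coord m k l q)"
  have fixed: "x $ j = cnj (x $ swap_cd_coord m k l q j)" if "j < n" for j
    using x that by (simp add: conj_fixed_def)
  have "x $ i \<in> \<real>" if "i < m" for i
    using fixed[of i] that n by (simp add: swap_cd_coord_def Reals_cnj_iff)
  moreover have "blk m q x B $ i \<in> \<real>" if "B < k" "i < q" for B i
  proof -
    have "m + B * q + i < n" using that n by (simp add: block_index_less)
    from fixed[OF this] show ?thesis
      using that by (simp add: blk_index swap_cd_coord_block swap_cd_block_def Reals_cnj_iff)
  qed
  moreover have "blk m q x (k + l + s) $ i = cnj (blk m q x (k + s) $ i)" if "s < l" "i < q" for s i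
  proof -
    have "m + (k + l + s) * q + i < n" using that n by (simp add: block_index_less)
    from fixed[OF this] show ?thesis
      using that by (simp add: blk_index swap_cd_coord_block swap_cd_block_def)
  qed
  ultimately show "x \<in> V_set n m k l q"
    using x by (simp add: conj_fixed_def V_set_def)
qed

lemma V_set_eq_conj_fixed:
  "n = m + (k + 2 * l) * q \<Longrightarrow> V_set n m k l q = conj_fixed n (swap_cd_coord m k l q)"
  by (intro equalityI V_set_subset_conj_fixed conj_fixed_subset_V_set)

lemma real_poly_fun_cnj:
  assumes "real_poly_fun M h" and "dim_vec a = M"
  shows "h (vec M (\<lambda>i. cnj (a $ i))) = cnj (h a)"
proof -
  obtain S c where "\<And>x. dim_vec x = M \<Longrightarrow> h x = (\<Sum>\<alpha>\<in>S. of_real (c \<alpha>) * (\<Prod>i<M. (x $ i) ^ \<alpha> i))"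
    using assms(1) unfolding real_poly_fun_def by blast
  then show ?thesis using assms(2) by simp
qed

lemma real_poly_fun_holomorphic:
  assumes "real_poly_fun M h" and "\<And>t. dim_vec (a t) = M"
    and "\<And>r. r < M \<Longrightarrow> (\<lambda>t. a t $ r) holomorphic_on UNIV"
  shows "(\<lambda>t. h (a t)) holomorphic_on UNIV"
proof -
  obtain S c where "\<And>x. dim_vec x = M \<Longrightarrow> h x = (\<Sum>\<alpha>\<in>S. of_real (c \<alpha>) * (\<Prod>i<M. (x $ i) ^ \<alpha> i))"
    using assms(1) unfolding real_poly_fun_def by blast
  then have "(\<lambda>t. h (a t)) = (\<lambda>t. \<Sum>\<alpha>\<in>S. of_real (c \<alpha>) * (\<Prod>i<M. (a t $ i) ^ \<alpha> i))"
    using assms(2) by auto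
  moreover have "(\<lambda>t. \<Sum>\<alpha>\<in>S. of_real (c \<alpha>) * (\<Prod>i<M. (a t $ i) ^ \<alpha> i)) holomorphic_on UNIV"
    using assms(3) by (intro holomorphic_intros) auto
  ultimately show ?thesis by simp
qed

lemma coord_line_holomorphic: "(\<lambda>t. coord_line n x j t $ s) holomorphic_on UNIV"
proof (cases "s < n")
  case True
  then show ?thesis by (cases "s = j") (auto intro: holomorphic_intros)
next
  case False
  \<comment> \<open>an out-of-range entry of \<open>vec n f\<close> is a junk value independent of \<open>f\<close>\<close>
  then have "(\<lambda>t. coord_line n x j t $ s) = (\<lambda>t. coord_line n x j 0 $ s)"
    by transfer (simp add: mk_vec_def)
  then show ?thesis by (simp add: holomorphic_intros)
qed

lemma newton_f_holomorphic_on_lines: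
  assumes n: "n = u + (k + 2 * l) * w" and g: "real_poly_map m u g" and p: "real_poly_map (m + q) w p"
    and i: "i < n"
  shows "(\<lambda>t. newton_f n m q u w g p (coord_line n x j t) $ i) holomorphic_on UNIV"
proof (cases "i < u")
  case True
  have "real_poly_fun m (\<lambda>z. g z $ i)" using g True by (simp add: real_poly_map_def)
  then have "(\<lambda>t. g (vec m (\<lambda>r. coord_line n x j t $ r)) $ i) holomorphic_on UNIV"
    by (rule real_poly_fun_holomorphic) (simp_all add: coord_line_holomorphic)
  then show ?thesis using True i by (simp add: newton_f_def)
next
  case False
  then have "w > 0" using i n by (cases w) auto
  define B where "B = (i - u) div w"
  define e where "e = (i - u) mod w"
  have "real_poly_fun (m + q) (\<lambda>z. p z $ e)"
    using p \<open>w > 0\<close> by (simp add: real_poly_map_def e_def)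
  then have "(\<lambda>t. p (pair_blk m q (coord_line n x j t) B) $ e) holomorphic_on UNIV"
  proof (rule real_poly_fun_holomorphic)
    show "(\<lambda>t. pair_blk m q (coord_line n x j t) B $ r) holomorphic_on UNIV" if "r < m + q" for r
      using that by (cases "r < m") (simp_all add: pair_blk_def coord_line_holomorphic)
  qed (simp add: pair_blk_def)
  then show ?thesis using False i by (simp add: newton_f_def B_def e_def)
qed

lemma pair_blk_conj_perm:
  assumes n: "n = m + (k + 2 * l) * q" and B: "B < k + 2 * l"
  shows "pair_blk m q (conj_perm n (swap_cd_coord m k l q) y) B
    = vec (m + q) (\<lambda>r. cnj (pair_blk m q y (swap_cd_block k l B) $ r))"
proof (rule eq_vecI)
  fix r assume "r < dim_vec (vec (m + q) (\<lambda>r. cnj (pair_blk m q y (swap_cd_block k l B) $ r)))"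
  then have r: "r < m + q" by simp
  show "pair_blk m q (conj_perm n (swap_cd_coord m k l q) y) B $ r
    = vec (m + q) (\<lambda>r. cnj (pair_blk m q y (swap_cd_block k l B) $ r)) $ r"
  proof (cases "r < m")
    case True
    then show ?thesis using r n by (simp add: pair_blk_def swap_cd_coord_def)
  next
    case False
    then have "m + B * q + (r - m) < n" using block_index_less[OF B, of "r - m" q m] r n by simp
    then show ?thesis
      using False r swap_cd_coord_block[of "r - m" q m k l B] by (simp add: pair_blk_def)
  qed
qed (simp add: pair_blk_def)

lemma newton_f_conj_perm:
  assumes nq: "n = m + (k + 2 * l) * q" and nw: "n = u + (k + 2 * l) * w"
    and g: "real_poly_map m u g" and p: "real_poly_map (m + q) w p" and y: "dim_vec y = n"
  shows "newton_f n m q u w g p (conj_perm n (swap_cd_coord m k l q) y)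
    = conj_perm n (swap_cd_coord u k l w) (newton_f n m q u w g p y)"
proof (rule eq_vecI)
  let ?Y = "conj_perm n (swap_cd_coord m k l q) y"
  fix i assume "i < dim_vec (conj_perm n (swap_cd_coord u k l w) (newton_f n m q u w g p y))"
  then have i: "i < n" by simp
  show "newton_f n m q u w g p ?Y $ i = conj_perm n (swap_cd_coord u k l w) (newton_f n m q u w g p y) $ i"
  proof (cases "i < u")
    case True
    have "vec m (\<lambda>r. ?Y $ r) = vec m (\<lambda>r. cnj (vec m (\<lambda>r. y $ r) $ r))"
      using nq by (intro eq_vecI) (simp_all add: swap_cd_coord_def)
    moreover have "real_poly_fun m (\<lambda>z. g z $ i)" using g True by (simp add: real_poly_map_def)
    ultimately have "g (vec m (\<lambda>r. ?Y $ r)) $ i = cnj (g (vec m (\<lambda>r. y $ r)) $ i)"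
      using real_poly_fun_cnj[of m "\<lambda>z. g z $ i" "vec m (\<lambda>r. y $ r)"] by simp
    then show ?thesis using True i by (simp add: newton_f_def swap_cd_coord_def)
  next
    case False
    then obtain B e where i_eq: "i = u + B * w + e" and e: "e < w" and B: "B < k + 2 * l"
      using block_decomposition[of u i "k + 2 * l" w] i nw by auto
    let ?B' = "swap_cd_block k l B"
    have "u + ?B' * w + e < n"
      using nw e B by (simp add: block_index_less swap_cd_block_less)
    then have rhs: "newton_f n m q u w g p y $ swap_cd_coord u k l w i = p (pair_blk m q y ?B') $ e"
      using e by (simp add: i_eq newton_f_def swap_cd_coord_block)
    have "real_poly_fun (m + q) (\<lambda>z. p z $ e)" using p e by (simp add: real_poly_map_def)
    moreover have "dim_vec (pair_blk m q y ?B') = m + q" by (simp add: pair_blk_def)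
    ultimately have "p (pair_blk m q ?Y B) $ e = cnj (p (pair_blk m q y ?B') $ e)"
      using real_poly_fun_cnj[of "m + q" "\<lambda>z. p z $ e" "pair_blk m q y ?B'"]
      by (simp add: pair_blk_conj_perm[OF nq B])
    then show ?thesis
      using i e rhs by (simp add: i_eq newton_f_def)
  qed
qed (simp add: newton_f_def)

theorem theorem2:
  fixes m k l q u w n :: nat
    and g p :: "complex vec \<Rightarrow> complex vec"
  assumes "u \<le> m"
    and "m + (k + 2 * l) * q = u + (k + 2 * l) * w"
    and "n = m + (k + 2 * l) * q"
    and "real_poly_map m u g"
    and "real_poly_map (m + q) w p"
  shows "newton_invariant n (newton_f n m q u w g p) (V_set n m k l q)"
proof -
  \<comment> \<open>The symmetry argument does not need the hypothesis \<open>u \<le> m\<close>.\<close>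
  have nw: "n = u + (k + 2 * l) * w" using assms(2,3) by simp
  interpret conj_equivariant n "swap_cd_coord m k l q" "swap_cd_coord u k l w" "newton_f n m q u w g p"
  proof
    show "swap_cd_coord m k l q (swap_cd_coord m k l q j) = j" for j
      by (rule swap_cd_coord_involution)
    show "swap_cd_coord m k l q j < n" if "j < n" for j
      using swap_cd_coord_less that assms(3) by simp
    show "swap_cd_coord u k l w i < n" if "i < n" for i
      using swap_cd_coord_less that nw by simp
    show "dim_vec (newton_f n m q u w g p x) = n" for x
      by (simp add: newton_f_def)
    show "newton_f n m q u w g p (conj_perm n (swap_cd_coord m k l q) y)
        = conj_perm n (swap_cd_coord u k l w) (newton_f n m q u w g p y)" if "dim_vec y = n" for y
      by (rule newton_f_conj_perm[OF assms(3) nw assms(4,5) that])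
    show "(\<lambda>t. newton_f n m q u w g p (coord_line n x j t) $ i) holomorphic_on UNIV"
      if "i < n" for x i j
      by (rule newton_f_holomorphic_on_lines[OF nw assms(4,5) that])
  qed
  show ?thesis
    using newton_invariant_conj_fixed V_set_eq_conj_fixed[OF assms(3)] by simp
qed

end
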